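(* Let $X$ be a distance-regular graph of diameter $d\geq 2$, degree $k$ and $\mu=c_2$. Then every pair of distinct vertices $u,v$ of $X$ is distinguished by at least $k-\mu$ vertices, i.e. there are at least $k-\mu$ vertices $x$ with $\mathrm{dist}(x,u)\neq\mathrm{dist}(x,v)$.
   Context: A connected graph $X$ of diameter $d$ is distance-regular if there are integers $a_i,b_i,c_i$ ($0\le i\le d$) such that for all vertices $v,w$ with $\mathrm{dist}(v,w)=i$, $w$ has exactly $c_i$ neighbours at distance $i-1$, $a_i$ at distance $i$, $b_i$ at distance $i+1$ from $v$; $X$ is $k$-regular with $k=b_0$, and $\mu=c_2$ is the number of common neighbours of two vertices at distance 2. *)

theory Defs
  imports Main
begin

definition simple_graph :: "'a set \<Rightarrow> ('a \<Rightarrow> 'a \<Rightarrow> bool) \<Rightarrow> bool" where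
  "simple_graph V E \<longleftrightarrow> finite V \<and> V \<noteq> {} \<and>
     (\<forall>x y. E x y \<longrightarrow> x \<in> V \<and> y \<in> V) \<and>
     (\<forall>x y. E x y \<longrightarrow> E y x) \<and> (\<forall>x. \<not> E x x)"

definition is_walk :: "'a set \<Rightarrow> ('a \<Rightarrow> 'a \<Rightarrow> bool) \<Rightarrow> 'a \<Rightarrow> 'a \<Rightarrow> nat \<Rightarrow> bool" where
  "is_walk V E u v n \<longleftrightarrow> (\<exists>p :: nat \<Rightarrow> 'a. p 0 = u \<and> p n = v \<and> (\<forall>i\<le>n. p i \<in> V) \<and>
       (\<forall>i<n. E (p i) (p (Suc i))))"

definition connected_graph :: "'a set \<Rightarrow> ('a \<Rightarrow> 'a \<Rightarrow> bool) \<Rightarrow> bool" where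
  "connected_graph V E \<longleftrightarrow> (\<forall>u\<in>V. \<forall>v\<in>V. \<exists>n. is_walk V E u v n)"

text \<open>Graph distance (meaningful for connected graphs).\<close>
definition gdist :: "'a set \<Rightarrow> ('a \<Rightarrow> 'a \<Rightarrow> bool) \<Rightarrow> 'a \<Rightarrow> 'a \<Rightarrow> nat" where
  "gdist V E u v = (LEAST n. is_walk V E u v n)"

definition diameter :: "'a set \<Rightarrow> ('a \<Rightarrow> 'a \<Rightarrow> bool) \<Rightarrow> nat" where
  "diameter V E = Max {gdist V E u v | u v. u \<in> V \<and> v \<in> V}"

definition distance_regular ::
  "'a set \<Rightarrow> ('a \<Rightarrow> 'a \<Rightarrow> bool) \<Rightarrow> nat \<Rightarrow> (nat \<Rightarrow> nat) \<Rightarrow> (nat \<Rightarrow> nat) \<Rightarrow> (nat \<Rightarrow> nat) \<Rightarrow> bool" where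
  "distance_regular V E d a b c \<longleftrightarrow>
     simple_graph V E \<and> connected_graph V E \<and> diameter V E = d \<and>
     (\<forall>i\<le>d. \<forall>v\<in>V. \<forall>w\<in>V. gdist V E v w = i \<longrightarrow>
        card {x\<in>V. E w x \<and> gdist V E v x + 1 = i} = c i \<and>
        card {x\<in>V. E w x \<and> gdist V E v x = i} = a i \<and>
        card {x\<in>V. E w x \<and> gdist V E v x = i + 1} = b i)"

end

theory Submission
  imports Defs
begin

text \<open>Every vertex adjacent to exactly one of \<open>u\<close>, \<open>v\<close> distinguishes them, so at least
  \<open>2(k - |N(u) \<inter> N(v)|)\<close> vertices do, and it suffices to show \<open>2 |N(u) \<inter> N(v)| \<le> k + \<mu>\<close>.
  This is clear unless \<open>u\<close> and \<open>v\<close> are adjacent, where \<open>|N(u) \<inter> N(v)| = a\<^sub>1\<close>. Then, as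
  \<open>d \<ge> 2\<close>, there is a neighbour \<open>w\<close> of \<open>v\<close> at distance 2 from \<open>u\<close>; the \<open>\<mu>\<close> common neighbours
  of \<open>u\<close> and \<open>w\<close> include \<open>v\<close>, and the \<open>k - a\<^sub>1\<close> neighbours of \<open>v\<close> not adjacent to \<open>w\<close>
  include \<open>u\<close> and \<open>w\<close>. Splitting \<open>N(u) \<inter> N(v)\<close> according to adjacency with \<open>w\<close> gives
  \<open>a\<^sub>1 \<le> (\<mu> - 1) + (k - a\<^sub>1 - 2)\<close>.\<close>

definition neighbours :: "'a set \<Rightarrow> ('a \<Rightarrow> 'a \<Rightarrow> bool) \<Rightarrow> 'a \<Rightarrow> 'a set" where
  "neighbours V E x = {y\<in>V. E x y}"

lemma is_walk_snoc:
  assumes "is_walk V E u y n" and "E y z" and "z \<in> V"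
  shows "is_walk V E u z (Suc n)"
proof -
  obtain p where p: "p 0 = u" "p n = y" "\<forall>i\<le>n. p i \<in> V" "\<forall>i<n. E (p i) (p (Suc i))"
    using assms(1) unfolding is_walk_def by blast
  show ?thesis
    unfolding is_walk_def
    by (rule exI[of _ "p(Suc n := z)"]) (use p assms(2,3) in \<open>auto simp: le_Suc_eq less_Suc_eq\<close>)
qed

lemma is_walk_0: "u \<in> V \<Longrightarrow> is_walk V E u u 0"
  unfolding is_walk_def by (rule exI[of _ "\<lambda>_. u"]) auto

lemma is_walk_0_eq: "is_walk V E u v 0 \<Longrightarrow> u = v"
  unfolding is_walk_def by auto

lemma is_walk_1: "simple_graph V E \<Longrightarrow> E u v \<Longrightarrow> is_walk V E u v 1"
  unfolding is_walk_def simple_graph_def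
  by (rule exI[of _ "\<lambda>i. if i = 0 then u else v"]) auto

lemma is_walk_1_adjacent: "is_walk V E u v 1 \<Longrightarrow> E u v"
  unfolding is_walk_def by auto

lemma gdist_le_walk: "is_walk V E u v n \<Longrightarrow> gdist V E u v \<le> n"
  by (simp add: gdist_def Least_le)

lemma is_walk_gdist:
  "connected_graph V E \<Longrightarrow> u \<in> V \<Longrightarrow> v \<in> V \<Longrightarrow> is_walk V E u v (gdist V E u v)"
  unfolding gdist_def connected_graph_def by (meson LeastI_ex)

lemma gdist_self: "u \<in> V \<Longrightarrow> gdist V E u u = 0"
  using gdist_le_walk[OF is_walk_0] by fastforce

lemma gdist_eq_0_iff:
  "connected_graph V E \<Longrightarrow> u \<in> V \<Longrightarrow> v \<in> V \<Longrightarrow> gdist V E u v = 0 \<longleftrightarrow> u = v"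
  using is_walk_gdist is_walk_0_eq gdist_self by metis

lemma gdist_eq_1_iff:
  assumes "simple_graph V E" and "connected_graph V E" and "u \<in> V" and "v \<in> V"
  shows "gdist V E u v = 1 \<longleftrightarrow> E u v"
proof
  assume "gdist V E u v = 1"
  then show "E u v" using is_walk_gdist[OF assms(2-4)] is_walk_1_adjacent by fastforce
next
  assume "E u v"
  then have "u \<noteq> v" using assms(1) unfolding simple_graph_def by blast
  with \<open>E u v\<close> show "gdist V E u v = 1"
    using gdist_le_walk[OF is_walk_1[OF assms(1)]] gdist_eq_0_iff[OF assms(2-4)]
    by (metis One_nat_def le_SucE le_zero_eq)
qed

lemma gdist_adjacent_le:
  "connected_graph V E \<Longrightarrow> p \<in> V \<Longrightarrow> y \<in> V \<Longrightarrow> z \<in> V \<Longrightarrow> E y z \<Longrightarrow>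
    gdist V E p z \<le> gdist V E p y + 1"
  using is_walk_gdist is_walk_snoc gdist_le_walk by fastforce

text \<open>Distances from \<open>p\<close> change by at most one along a walk, so a walk from \<open>p\<close> can only
  leave the ball of radius 1 by stepping from distance 1 to distance 2.\<close>

lemma gdist_le_1_if_no_edge_to_distance_2:
  assumes "connected_graph V E" and "p \<in> V" and "z \<in> V"
    and no_step: "\<And>y w. y \<in> V \<Longrightarrow> w \<in> V \<Longrightarrow> gdist V E p y = 1 \<Longrightarrow> E y w \<Longrightarrow> gdist V E p w \<noteq> 2"
  shows "gdist V E p z \<le> 1"
proof -
  obtain n where "is_walk V E p z n" using assms(1-3) unfolding connected_graph_def by blast
  then obtain q where q: "q 0 = p" "q n = z" "\<forall>i\<le>n. q i \<in> V" "\<forall>i<n. E (q i) (q (Suc i))"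
    unfolding is_walk_def by blast
  have "gdist V E p (q i) \<le> 1" if "i \<le> n" for i
    using that
  proof (induction i)
    case 0
    then show ?case using gdist_self[OF assms(2)] q(1) by simp
  next
    case (Suc i)
    have qi: "q i \<in> V" "q (Suc i) \<in> V" "E (q i) (q (Suc i))" using q Suc.prems by auto
    have "gdist V E p (q i) \<le> 1" using Suc by simp
    moreover have "gdist V E p (q (Suc i)) \<le> gdist V E p (q i) + 1"
      using gdist_adjacent_le[OF assms(1,2) qi] .
    moreover have "gdist V E p (q i) = 1 \<Longrightarrow> gdist V E p (q (Suc i)) \<noteq> 2"
      using no_step qi by blast
    ultimately show ?case by linarith
  qed
  then show ?thesis using q(2) by auto
qed

lemma gdist_le_diameter:
  assumes "finite V" and "u \<in> V" and "v \<in> V"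
  shows "gdist V E u v \<le> diameter V E"
proof -
  have "finite {gdist V E p q |p q. p \<in> V \<and> q \<in> V}"
    using finite_image_set2[of "\<lambda>p. p \<in> V" "\<lambda>q. q \<in> V" "gdist V E"] assms(1) by simp
  then show ?thesis unfolding diameter_def using assms(2,3) by (auto intro: Max_ge)
qed

lemma diameter_le:
  assumes "finite V" and "V \<noteq> {}" and "\<And>u v. u \<in> V \<Longrightarrow> v \<in> V \<Longrightarrow> gdist V E u v \<le> n"
  shows "diameter V E \<le> n"
proof -
  have "finite {gdist V E p q |p q. p \<in> V \<and> q \<in> V}"
    using finite_image_set2[of "\<lambda>p. p \<in> V" "\<lambda>q. q \<in> V" "gdist V E"] assms(1) by simp
  moreover have "{gdist V E p q |p q. p \<in> V \<and> q \<in> V} \<noteq> {}" using assms(2) by blast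
  ultimately show ?thesis unfolding diameter_def using assms(3) by (subst Max_le_iff) auto
qed

lemma neighbours_sym_diff_distinguish:
  assumes "simple_graph V E" and "connected_graph V E" and "u \<in> V" and "v \<in> V"
  shows "(neighbours V E u - neighbours V E v) \<union> (neighbours V E v - neighbours V E u)
    \<subseteq> {x\<in>V. gdist V E x u \<noteq> gdist V E x v}"
proof -
  have "gdist V E x u \<noteq> gdist V E x v" if "x \<in> V" "E x u \<longleftrightarrow> \<not> E x v" for x
    using gdist_eq_1_iff[OF assms(1,2) that(1)] assms(3,4) that(2) by metis
  moreover have "E x y \<longleftrightarrow> E y x" for x y using assms(1) unfolding simple_graph_def by blast
  ultimately show ?thesis unfolding neighbours_def by auto
qed

locale distance_regular_graph =
  fixes V :: "'a set" and E :: "'a \<Rightarrow> 'a \<Rightarrow> bool" and d :: nat and a b c :: "nat \<Rightarrow> nat"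
  assumes distance_regular: "distance_regular V E d a b c"
begin

abbreviation N :: "'a \<Rightarrow> 'a set" where
  "N \<equiv> neighbours V E"

lemma simple: "simple_graph V E" and connected: "connected_graph V E"
  and diameter: "diameter V E = d"
  using distance_regular unfolding distance_regular_def by auto

lemma finite_V: "finite V" and adjacent_in_V: "E x y \<Longrightarrow> x \<in> V \<and> y \<in> V"
  and adjacent_sym: "E x y \<Longrightarrow> E y x" and not_adjacent_self: "\<not> E x x"
  using simple unfolding simple_graph_def by auto

lemma finite_neighbours: "finite (N x)"
  using finite_V unfolding neighbours_def by simp

lemma gdist_eq_1_iff_adjacent: "u \<in> V \<Longrightarrow> v \<in> V \<Longrightarrow> gdist V E u v = 1 \<longleftrightarrow> E u v"
  using gdist_eq_1_iff[OF simple connected] .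

text \<open>No \<open>i \<le> d\<close> guard is needed, since every distance is at most the diameter.\<close>

lemma intersection_numbers:
  assumes "v \<in> V" and "w \<in> V"
  shows "card {x\<in>V. E w x \<and> gdist V E v x + 1 = gdist V E v w} = c (gdist V E v w)"
    and "card {x\<in>V. E w x \<and> gdist V E v x = gdist V E v w} = a (gdist V E v w)"
    and "card {x\<in>V. E w x \<and> gdist V E v x = gdist V E v w + 1} = b (gdist V E v w)"
  using distance_regular gdist_le_diameter[OF finite_V assms, of E] assms diameter
  unfolding distance_regular_def by blast+

lemma card_neighbours:
  assumes "x \<in> V"
  shows "card (N x) = b 0"
proof -
  have "N x = {y\<in>V. E x y \<and> gdist V E x y = gdist V E x x + 1}"
    using gdist_self[OF assms] gdist_eq_1_iff_adjacent[OF assms] adjacent_in_V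
    unfolding neighbours_def by auto
  then show ?thesis using intersection_numbers(3)[OF assms assms] gdist_self[OF assms] by simp
qed

lemma card_neighbours_diff: "u \<in> V \<Longrightarrow> card (N u - N v) = b 0 - card (N u \<inter> N v)"
  using card_Diff_subset_Int[of "N u" "N v"] finite_neighbours card_neighbours
  by (simp add: Int_commute)

lemma card_common_neighbours_gdist_2:
  assumes "u \<in> V" and "v \<in> V" and "gdist V E u v = 2"
  shows "card (N u \<inter> N v) = c 2"
proof -
  have "N u \<inter> N v = {x\<in>V. E v x \<and> gdist V E u x + 1 = gdist V E u v}"
    using gdist_eq_1_iff_adjacent assms unfolding neighbours_def by auto
  then show ?thesis using intersection_numbers(1)[OF assms(1,2)] assms(3) by simp
qed

lemma card_common_neighbours_adjacent:
  assumes "E u v"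
  shows "card (N u \<inter> N v) = a 1"
proof -
  have uv: "u \<in> V" "v \<in> V" "gdist V E u v = 1"
    using assms adjacent_in_V gdist_eq_1_iff_adjacent by auto
  then have "N u \<inter> N v = {x\<in>V. E v x \<and> gdist V E u x = 1}"
    using gdist_eq_1_iff_adjacent unfolding neighbours_def by auto
  then show ?thesis using intersection_numbers(2)[OF uv(1,2)] uv(3) by simp
qed

lemma common_neighbours_far:
  assumes "u \<in> V" and "v \<in> V" and "gdist V E u v \<ge> 3"
  shows "N u \<inter> N v = {}"
proof (rule ccontr)
  assume "N u \<inter> N v \<noteq> {}"
  then obtain x where x: "x \<in> V" "E u x" "E v x" unfolding neighbours_def by auto
  have "gdist V E u v \<le> gdist V E u x + 1"
    using gdist_adjacent_le[OF connected assms(1) x(1) assms(2)] adjacent_sym x(3) by blast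
  then show False using gdist_eq_1_iff_adjacent[of u x] x assms by simp
qed

lemma b1_pos:
  assumes "d \<ge> 2"
  shows "b 1 > 0"
proof (rule ccontr)
  assume "\<not> b 1 > 0"
  then have no_step: "gdist V E p w \<noteq> 2"
    if "p \<in> V" "y \<in> V" "gdist V E p y = 1" "E y w" for p y w
    using intersection_numbers(3)[of p y] that finite_V adjacent_in_V by auto
  have "diameter V E \<le> 1"
  proof (rule diameter_le[OF finite_V])
    show "V \<noteq> {}" using simple unfolding simple_graph_def by blast
    show "gdist V E p z \<le> 1" if "p \<in> V" "z \<in> V" for p z
      using gdist_le_1_if_no_edge_to_distance_2[OF connected that] no_step that(1) by blast
  qed
  then show False using diameter assms by simp
qed

lemma two_a1_bound:
  assumes "d \<ge> 2" and "E u v"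
  shows "2 * a 1 + 3 \<le> b 0 + c 2"
proof -
  have uv: "u \<in> V" "v \<in> V" "gdist V E u v = 1"
    using assms(2) adjacent_in_V gdist_eq_1_iff_adjacent by auto
  have "{x\<in>V. E v x \<and> gdist V E u x = gdist V E u v + 1} \<noteq> {}"
    using intersection_numbers(3)[OF uv(1,2)] uv(3) b1_pos[OF assms(1)] by (metis card.empty less_irrefl)
  then obtain w where w: "w \<in> V" "E v w" "gdist V E u w = 2" using uv(3) by auto
  have "u \<noteq> w" "\<not> E u w" using w(3) gdist_self[of u V E] gdist_eq_1_iff_adjacent[of u w] uv(1) w(1) by auto
  define A where "A = N u \<inter> N v"
  have "insert v (A \<inter> N w) \<subseteq> N u \<inter> N w" "v \<notin> A"
    using assms(2) w(2) uv adjacent_sym not_adjacent_self unfolding A_def neighbours_def by auto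
  then have mu: "card (A \<inter> N w) + 1 \<le> c 2"
    using card_mono[OF _ \<open>insert v (A \<inter> N w) \<subseteq> _\<close>] finite_neighbours
      card_common_neighbours_gdist_2[OF uv(1) w(1,3)]
    by (metis Int_iff Suc_eq_plus1 card_insert_disjoint finite_Int)
  have "insert u (insert w (A - N w)) \<subseteq> N v - N w" "u \<notin> insert w (A - N w)" "w \<notin> A"
    using assms(2) w(1,2) uv \<open>u \<noteq> w\<close> \<open>\<not> E u w\<close> adjacent_sym not_adjacent_self
    unfolding A_def neighbours_def by auto
  then have "card (A - N w) + 2 \<le> card (N v - N w)"
    using card_mono[OF _ \<open>insert u _ \<subseteq> _\<close>] finite_neighbours
    by (metis Diff_iff add_2_eq_Suc' card_insert_disjoint finite_Diff finite_Int finite_insert A_def)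
  also have "\<dots> = b 0 - a 1"
    using card_neighbours_diff[OF uv(2)] card_common_neighbours_adjacent[OF w(2)] by simp
  finally have k: "card (A - N w) + 2 \<le> b 0 - a 1" .
  have "card A = card (A \<inter> N w) + card (A - N w)"
    using card_Int_Diff[of A "N w"] finite_neighbours unfolding A_def by blast
  moreover have "card A = a 1" using card_common_neighbours_adjacent[OF assms(2)] A_def by simp
  ultimately show ?thesis using mu k by linarith
qed

lemma common_neighbours_bound:
  assumes "d \<ge> 2" and "u \<in> V" and "v \<in> V" and "u \<noteq> v"
  shows "2 * card (N u \<inter> N v) \<le> b 0 + c 2"
proof -
  consider "gdist V E u v = 1" | "gdist V E u v = 2" | "gdist V E u v \<ge> 3"
    using gdist_eq_0_iff[OF connected assms(2,3)] assms(4) by linarith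
  then show ?thesis
  proof cases
    case 1
    then show ?thesis using two_a1_bound[OF assms(1)] card_common_neighbours_adjacent
        gdist_eq_1_iff_adjacent assms(2,3) by fastforce
  next
    case 2
    have "card (N u \<inter> N v) \<le> b 0"
      using card_mono[OF finite_neighbours, of "N u \<inter> N v" u] card_neighbours[OF assms(2)] by simp
    then show ?thesis using card_common_neighbours_gdist_2[OF assms(2,3) 2] by simp
  next
    case 3
    then show ?thesis using common_neighbours_far[OF assms(2,3)] by simp
  qed
qed

end

theorem lemma4p2:
  fixes V :: "'v set" and E :: "'v \<Rightarrow> 'v \<Rightarrow> bool"
    and d :: nat and a b c :: "nat \<Rightarrow> nat" and u v :: 'v
  assumes "distance_regular V E d a b c"
    and "d \<ge> 2"
    and "u \<in> V" and "v \<in> V" and "u \<noteq> v"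
  shows "int (card {x\<in>V. gdist V E x u \<noteq> gdist V E x v}) \<ge> int (b 0) - int (c 2)"
proof -
  interpret distance_regular_graph V E d a b c by (rule distance_regular_graph.intro) fact
  define m where "m = card (N u \<inter> N v)"
  have "card ((N u - N v) \<union> (N v - N u)) \<le> card {x\<in>V. gdist V E x u \<noteq> gdist V E x v}"
    using card_mono[OF _ neighbours_sym_diff_distinguish[OF simple connected assms(3,4)]]
      finite_V by simp
  moreover have "card ((N u - N v) \<union> (N v - N u)) = (b 0 - m) + (b 0 - m)"
    using card_Un_disjoint[of "N u - N v" "N v - N u"] finite_neighbours
      card_neighbours_diff[OF assms(3), of v] card_neighbours_diff[OF assms(4), of u]
    unfolding m_def by (auto simp: Int_commute)
  moreover have "2 * m \<le> b 0 + c 2"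
    using common_neighbours_bound[OF assms(2-5)] unfolding m_def .
  ultimately show ?thesis by linarith
qed

end
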